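(* Let $\mathcal{G}=(\mathcal{V},\mathcal{E})$ be a graph with node set $\mathcal{V}=\{1,\dots,n\}$, adjacency matrix $A=[a_{ij}]\in\{0,1\}^{n\times n}$ (with $a_{ij}=1$ iff $(i,j)\in\mathcal{E}$), and degree matrix $D=\mathrm{diag}(d_1,\dots,d_n)$, where $d_i=\sum_{j=1}^n a_{ij}$; assume $d_i>0$ for all $i$, so that $D^{-1}$ exists. Let $X\in\mathbb{R}^{n\times d}$ be a node feature matrix, $W_1\in\mathbb{R}^{d\times d'}$ and $W_2\in\mathbb{R}^{d'\times d'}$ (the propagation matrix). Consider the feature propagation process $$\widetilde{X} = X W_1 + D^{-1} A\, \widetilde{X}\, W_2,$$ equivalently, row-wise, $\widetilde{x_i}=W_1^T x_i + W_2^T \sum_{j\in \mathcal{N}(i)}\frac{1}{d_i}\widetilde{x_j}$ for $i=1,\dots,n$, where $\mathcal{N}(i)$ is the set of neighbors of node $i$, $x_i^T$ is the $i$-th row of $X$ and $\widetilde{x_i}^T$ is the $i$-th row of $\widetilde{X}$. Suppose that (1) $W_2$ is entrywise nonnegative, and (2) $\max\{W_2^T\mathbf{e}\}<1$, where $\mathbf{e}$ is the all-ones vector and the maximum is over the entries of the vector $W_2^T\mathbf{e}$ (i.e., every column sum of $W_2$ is strictly less than $1$). Then the propagation process is convergent: the iteration $\widetilde{X}^{(t+1)} = X W_1 + D^{-1}A\widetilde{X}^{(t)}W_2$ converges for every initial $\widetilde{X}^{(0)}\in\mathbb{R}^{n\times d'}$, and its limit is the unique solution $\widetilde{X}\in\mathbb{R}^{n\times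 d'}$ of the equation $\widetilde{X} = X W_1 + D^{-1} A \widetilde{X} W_2$.
   Context: All matrices are real. $\mathbf{e}$ denotes the all-ones column vector of the appropriate dimension. For a vector $v$, $\max\{v\}$ denotes its largest entry. *)

theory Defs
  imports "HOL-Analysis.Analysis"
begin

definition degree_matrix :: "real^'n^'n \<Rightarrow> real^'n^'n" where
  "degree_matrix A = (\<chi> i j. if i = j then (\<Sum>k\<in>UNIV. A $ i $ k) else 0)"

definition ones_vec :: "real^'n" where
  "ones_vec = (\<chi> i. 1)"

definition prop_map ::
  "real^'n^'n \<Rightarrow> real^'d^'n \<Rightarrow> real^'e^'d \<Rightarrow> real^'e^'e \<Rightarrow> real^'e^'n \<Rightarrow> real^'e^'n" where
  "prop_map A X W1 W2 Z = X ** W1 + ((matrix_inv (degree_matrix A) ** A) ** Z) ** W2"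

end

theory Submission
  imports Defs
begin

text \<open>
  With \<open>P = D\<^sup>-\<^sup>1 A\<close> and \<open>L Z = P Z W\<^sub>2\<close>, the propagation map is \<open>Z \<mapsto> X W\<^sub>1 + L Z\<close>.
  Since \<open>P\<close> is nonnegative with unit row sums, multiplying by \<open>P\<close> does not increase the
  largest absolute entry of a matrix, and multiplying by \<open>W\<^sub>2\<close> scales it by at most the
  largest column sum \<open>c < 1\<close> of \<open>W\<^sub>2\<close>. Hence all iterates of the linear map \<open>L\<close> tend to \<open>0\<close>.
  Then \<open>L\<close> has no nonzero fixed point, so \<open>I - L\<close> is injective and, by finite dimensionality,
  surjective; this yields the unique fixed point \<open>Y\<close>, and the errors \<open>Z\<^sub>t - Y\<close> of any
  iteration are themselves iterates of \<open>L\<close>.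
\<close>

definition diag :: "('n::finite \<Rightarrow> 'a::zero) \<Rightarrow> 'a^'n^'n" where
  "diag d = (\<chi> i j. if i = j then d i else 0)"

lemma diag_mult_entry:
  fixes A :: "'a::semiring_1^'m^'n"
  shows "(diag d ** A) $ i $ j = d i * A $ i $ j"
proof -
  have "(\<Sum>k\<in>UNIV. (if i = k then d i else 0) * A $ k $ j)
      = (\<Sum>k\<in>UNIV. if k = i then d i * A $ i $ j else 0)"
    by (rule sum.cong) auto
  then have "(\<Sum>k\<in>UNIV. (if i = k then d i else 0) * A $ k $ j) = d i * A $ i $ j"
    by simp
  then show ?thesis by (simp add: diag_def matrix_matrix_mult_def)
qed

lemma diag_mult_diag: "diag d ** diag e = diag (\<lambda>i. d i * e i :: 'a::semiring_1)"
  by (simp add: vec_eq_iff diag_mult_entry) (simp add: diag_def)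

lemma matrix_inv_eqI:
  fixes A :: "'a::semiring_1^'n^'n"
  assumes "A ** B = mat 1" and "B ** A = mat 1"
  shows "matrix_inv A = B"
proof -
  have "\<exists>B'. A ** B' = mat 1 \<and> B' ** A = mat 1" using assms by blast
  then have inv: "A ** matrix_inv A = mat 1" "matrix_inv A ** A = mat 1"
    unfolding matrix_inv_def by (metis (mono_tags, lifting) someI_ex)+
  have "matrix_inv A = (B ** A) ** matrix_inv A" by (simp add: assms(2))
  also have "\<dots> = B" by (simp flip: matrix_mul_assoc add: inv)
  finally show ?thesis .
qed

lemma matrix_inv_diag:
  fixes d :: "'n::finite \<Rightarrow> 'a::field"
  assumes "\<And>i. d i \<noteq> 0"
  shows "matrix_inv (diag d) = diag (\<lambda>i. inverse (d i))"
  by (rule matrix_inv_eqI) (simp_all add: diag_mult_diag assms, simp_all add: diag_def mat_def)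

lemma degree_normalized_entry:
  fixes A :: "real^'n^'n"
  assumes "\<And>i. (\<Sum>j\<in>UNIV. A $ i $ j) \<noteq> 0"
  shows "(matrix_inv (degree_matrix A) ** A) $ i $ j = A $ i $ j / (\<Sum>k\<in>UNIV. A $ i $ k)"
proof -
  have "degree_matrix A = diag (\<lambda>i. \<Sum>k\<in>UNIV. A $ i $ k)"
    by (simp add: degree_matrix_def diag_def)
  then show ?thesis
    by (simp add: matrix_inv_diag assms diag_mult_entry divide_inverse mult.commute)
qed

lemma degree_normalized_row_stochastic:
  fixes A :: "real^'n^'n"
  assumes A_nonneg: "\<forall>i j. A $ i $ j \<ge> 0" and deg_pos: "\<forall>i. (\<Sum>j\<in>UNIV. A $ i $ j) > 0"
  shows "\<forall>i j. (matrix_inv (degree_matrix A) ** A) $ i $ j \<ge> 0"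
    and "\<forall>i. (\<Sum>j\<in>UNIV. (matrix_inv (degree_matrix A) ** A) $ i $ j) = 1"
proof -
  have deg_nonzero: "(\<Sum>j\<in>UNIV. A $ i $ j) \<noteq> 0" for i
    using deg_pos by (metis less_irrefl)
  show "\<forall>i j. (matrix_inv (degree_matrix A) ** A) $ i $ j \<ge> 0"
    using A_nonneg deg_pos by (simp add: degree_normalized_entry deg_nonzero less_imp_le)
  show "\<forall>i. (\<Sum>j\<in>UNIV. (matrix_inv (degree_matrix A) ** A) $ i $ j) = 1"
    by (simp add: degree_normalized_entry deg_nonzero flip: sum_divide_distrib)
qed

lemma linear_matrix_sandwich:
  fixes P :: "real^'m^'n" and W :: "real^'e^'k"
  shows "linear (\<lambda>Z. (P ** Z) ** W)"
  by (rule linearI)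
    (vector matrix_matrix_mult_def sum.distrib[symmetric] sum_distrib_left sum_distrib_right field_simps)+

lemma substochastic_mult_entry_bound:
  fixes P :: "real^'n^'n" and Z :: "real^'m^'n"
  assumes P_nonneg: "\<forall>i j. P $ i $ j \<ge> 0" and P_rowsum: "\<forall>i. (\<Sum>j\<in>UNIV. P $ i $ j) \<le> 1"
    and Z_bound: "\<forall>j l. \<bar>Z $ j $ l\<bar> \<le> B"
  shows "\<bar>(P ** Z) $ i $ l\<bar> \<le> B"
proof -
  have "B \<ge> 0" using Z_bound by (meson abs_ge_zero order_trans)
  have "\<bar>(P ** Z) $ i $ l\<bar> \<le> (\<Sum>j\<in>UNIV. \<bar>P $ i $ j * Z $ j $ l\<bar>)"
    unfolding matrix_matrix_mult_def by (simp add: sum_abs)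
  also have "\<dots> \<le> (\<Sum>j\<in>UNIV. P $ i $ j * B)"
    by (rule sum_mono) (simp add: abs_mult P_nonneg Z_bound mult_left_mono)
  also have "\<dots> = (\<Sum>j\<in>UNIV. P $ i $ j) * B" by (simp add: sum_distrib_right)
  also have "\<dots> \<le> B"
    using P_rowsum \<open>B \<ge> 0\<close> by (intro mult_left_le_one_le) (auto intro: sum_nonneg simp: P_nonneg)
  finally show ?thesis .
qed

lemma colsum_mult_entry_bound:
  fixes W :: "real^'e^'m" and Z :: "real^'m^'n"
  assumes W_nonneg: "\<forall>l k. W $ l $ k \<ge> 0" and W_colsum: "\<forall>k. (\<Sum>l\<in>UNIV. W $ l $ k) \<le> c"
    and Z_bound: "\<forall>l. \<bar>Z $ i $ l\<bar> \<le> B"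
  shows "\<bar>(Z ** W) $ i $ k\<bar> \<le> c * B"
proof -
  have "B \<ge> 0" using Z_bound by (meson abs_ge_zero order_trans)
  have "\<bar>(Z ** W) $ i $ k\<bar> \<le> (\<Sum>l\<in>UNIV. \<bar>Z $ i $ l * W $ l $ k\<bar>)"
    unfolding matrix_matrix_mult_def by (simp add: sum_abs)
  also have "\<dots> \<le> (\<Sum>l\<in>UNIV. B * W $ l $ k)"
    by (rule sum_mono) (simp add: abs_mult W_nonneg Z_bound mult_right_mono)
  also have "\<dots> = B * (\<Sum>l\<in>UNIV. W $ l $ k)" by (simp add: sum_distrib_left)
  also have "\<dots> \<le> c * B" using W_colsum \<open>B \<ge> 0\<close> by (simp add: mult_left_mono mult.commute)
  finally show ?thesis .
qed

lemma sandwich_iterate_entry_bound: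
  fixes P :: "real^'n^'n" and W :: "real^'e^'e" and U :: "nat \<Rightarrow> real^'e^'n"
  assumes P_nonneg: "\<forall>i j. P $ i $ j \<ge> 0" and P_rowsum: "\<forall>i. (\<Sum>j\<in>UNIV. P $ i $ j) \<le> 1"
    and W_nonneg: "\<forall>l k. W $ l $ k \<ge> 0" and W_colsum: "\<forall>k. (\<Sum>l\<in>UNIV. W $ l $ k) \<le> c"
    and U_step: "\<forall>t. U (Suc t) = (P ** U t) ** W"
    and U0_bound: "\<forall>i k. \<bar>U 0 $ i $ k\<bar> \<le> B"
  shows "\<bar>U t $ i $ k\<bar> \<le> c ^ t * B"
proof (induction t arbitrary: i k)
  case 0
  then show ?case using U0_bound by simp
next
  case (Suc t)
  have "\<forall>l. \<bar>(P ** U t) $ i $ l\<bar> \<le> c ^ t * B"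
    using Suc.IH by (blast intro: substochastic_mult_entry_bound[OF P_nonneg P_rowsum])
  then have "\<bar>((P ** U t) ** W) $ i $ k\<bar> \<le> c * (c ^ t * B)"
    by (rule colsum_mult_entry_bound[OF W_nonneg W_colsum])
  then show ?case using U_step by simp
qed

lemma sandwich_iterate_tendsto_zero:
  fixes P :: "real^'n^'n" and W :: "real^'e^'e" and U :: "nat \<Rightarrow> real^'e^'n"
  assumes P_nonneg: "\<forall>i j. P $ i $ j \<ge> 0" and P_rowsum: "\<forall>i. (\<Sum>j\<in>UNIV. P $ i $ j) \<le> 1"
    and W_nonneg: "\<forall>l k. W $ l $ k \<ge> 0" and W_colsum: "\<forall>k. (\<Sum>l\<in>UNIV. W $ l $ k) \<le> c"
    and "c < 1"
    and U_step: "\<forall>t. U (Suc t) = (P ** U t) ** W"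
  shows "U \<longlonglongrightarrow> 0"
proof -
  have "c \<ge> 0" using W_colsum W_nonneg by (meson order_trans sum_nonneg)
  have "\<bar>U 0 $ i $ k\<bar> \<le> norm (U 0)" for i k
    using component_le_norm_cart[of "U 0 $ i" k] Finite_Cartesian_Product.norm_nth_le[of "U 0" i] by linarith
  then have bound: "\<bar>U t $ i $ k\<bar> \<le> c ^ t * norm (U 0)" for t i k
    by (intro sandwich_iterate_entry_bound[OF P_nonneg P_rowsum W_nonneg W_colsum U_step]) blast
  have "(\<lambda>t. c ^ t * norm (U 0)) \<longlonglongrightarrow> 0"
    using \<open>c \<ge> 0\<close> \<open>c < 1\<close> by (intro tendsto_mult_left_zero LIMSEQ_power_zero) auto
  then have "(\<lambda>t. U t $ i $ k) \<longlonglongrightarrow> 0" for i k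
    by (rule Lim_null_comparison[rotated]) (simp add: bound)
  then show ?thesis by (intro vec_tendstoI) simp
qed

lemma affine_iteration_converges:
  fixes L :: "'a::euclidean_space \<Rightarrow> 'a"
  assumes "linear L"
    and L_iterates: "\<And>U. \<forall>t. U (Suc t) = L (U t) \<Longrightarrow> U \<longlonglongrightarrow> 0"
  shows "\<exists>Y. (\<forall>Z. Z = b + L Z \<longleftrightarrow> Z = Y) \<and>
             (\<forall>Zt. (\<forall>t. Zt (Suc t) = b + L (Zt t)) \<longrightarrow> Zt \<longlonglongrightarrow> Y)"
proof -
  have L_fixed_zero: "Z = 0" if "L Z = Z" for Z
    using L_iterates[of "\<lambda>_. Z"] that LIMSEQ_const_iff by auto
  have error_step: "L (Z - Y) = Z' - Y" if "Z' = b + L Z" and "Y = b + L Y" for Z Z' Y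
    using that by (metis add_diff_cancel_left linear_diff[OF \<open>linear L\<close>])
  have "inj (\<lambda>Z. Z - L Z)"
  proof (rule injI)
    fix Z Z' assume "Z - L Z = Z' - L Z'"
    then have "L (Z - Z') = Z - Z'" by (simp add: linear_diff[OF \<open>linear L\<close>] algebra_simps)
    then show "Z = Z'" using L_fixed_zero[of "Z - Z'"] by simp
  qed
  moreover have "linear (\<lambda>Z. Z - L Z)" by (rule linear_compose_sub[OF linear_ident \<open>linear L\<close>])
  ultimately have "surj (\<lambda>Z. Z - L Z)" using linear_injective_imp_surjective by blast
  then obtain Y where "Y - L Y = b" by (metis surjD)
  then have Y_fixed: "Y = b + L Y" by (simp add: algebra_simps)
  show ?thesis
  proof (intro exI conjI allI impI iffI)
    fix Z assume "Z = b + L Z"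
    then have "L (Z - Y) = Z - Y" using Y_fixed by (rule error_step)
    then show "Z = Y" using L_fixed_zero[of "Z - Y"] by simp
  next
    fix Zt :: "nat \<Rightarrow> 'a" assume "\<forall>t. Zt (Suc t) = b + L (Zt t)"
    then have "(\<lambda>t. Zt t - Y) \<longlonglongrightarrow> 0" using error_step[OF _ Y_fixed, symmetric] by (intro L_iterates) blast
    then show "Zt \<longlonglongrightarrow> Y" by (simp add: LIM_zero_iff)
  qed (use Y_fixed in simp)
qed

theorem theorem1:
  fixes A :: "real^'n^'n" and X :: "real^'d^'n"
    and W1 :: "real^'e^'d" and W2 :: "real^'e^'e"
  assumes adj01: "\<forall>i j. A $ i $ j \<in> {0, 1}"
    and deg_pos: "\<forall>i. (\<Sum>j\<in>UNIV. A $ i $ j) > 0"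
    and W2_nonneg: "\<forall>i j. W2 $ i $ j \<ge> 0"
    and W2_colsum: "\<forall>j. (transpose W2 *v ones_vec) $ j < 1"
  shows "\<exists>Y. (\<forall>Z. Z = prop_map A X W1 W2 Z \<longleftrightarrow> Z = Y) \<and>
             (\<forall>Xt :: nat \<Rightarrow> real^'e^'n.
                (\<forall>t. Xt (Suc t) = prop_map A X W1 W2 (Xt t)) \<longrightarrow> Xt \<longlonglongrightarrow> Y)"
proof -
  define P where "P = matrix_inv (degree_matrix A) ** A"
  have "\<forall>i j. A $ i $ j \<ge> 0" using adj01 by (metis insertE order.refl singletonD zero_le_one)
  then have P_nonneg: "\<forall>i j. P $ i $ j \<ge> 0" and P_rowsum: "\<forall>i. (\<Sum>j\<in>UNIV. P $ i $ j) \<le> 1"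
    using degree_normalized_row_stochastic[OF _ deg_pos] by (simp_all add: P_def)
  define colsum where "colsum k = (\<Sum>l\<in>UNIV. W2 $ l $ k)" for k
  have "colsum k < 1" for k
    using W2_colsum by (simp add: colsum_def matrix_vector_mult_def transpose_def ones_vec_def)
  then have "Max (range colsum) < 1" by (simp add: Max_less_iff)
  moreover have "\<forall>k. (\<Sum>l\<in>UNIV. W2 $ l $ k) \<le> Max (range colsum)"
    by (simp add: colsum_def[symmetric])
  ultimately have iterates_tendsto_zero: "U \<longlonglongrightarrow> 0" if "\<forall>t. U (Suc t) = (P ** U t) ** W2" for U
    using sandwich_iterate_tendsto_zero[OF P_nonneg P_rowsum W2_nonneg] that by blast
  have prop_map_eq: "prop_map A X W1 W2 = (\<lambda>Z. X ** W1 + (P ** Z) ** W2)"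
    by (simp add: fun_eq_iff prop_map_def P_def)
  show ?thesis
    unfolding prop_map_eq
    by (rule affine_iteration_converges[OF linear_matrix_sandwich iterates_tendsto_zero])
qed

end
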